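(* Let $p\geq 2$ be an integer and let $A=(a_0,a_1,\dots,a_{p-1})$ be complex numbers with $a_0+a_1+\dots+a_{p-1}=0$. For a positive integer $N$ define \[ F_N(x;A)=\sum_{n=0}^{p^{N}-1} a_{v_p(n)}x^n , \] where $v_p(n)=\left(\sum_{j=0}^d n_j\right)\bmod p\in\{0,\dots,p-1\}$ for the base-$p$ expansion $n=n_dp^d+\dots+n_1p+n_0$. Let $I_N$ be the set of integers $j$ with $0\le j<p^N$ all of whose $N$ base-$p$ digits lie in $\{0,1,\dots,p-2\}$ (so $I_1=\{0,1,\dots,p-2\}$, and $I_N=\{j+kp^{N-1}: j\in I_{N-1},\,0\le k\le p-2\}$). Then for every positive integer $N$ there exist complex constants $c_j$ ($j\in I_N$) such that, with $P_N(x;C_N)=\sum_{j\in I_N} c_j x^j$, \[ F_N(x;A)=P_N(x;C_N)\prod_{m=0}^{N-1}\left(1-x^{p^m}\right). \]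
   Context: The paper defines $C_1=(c_0,\dots,c_{p-2})$, $C_N=C_{N-1}(0)\#\cdots\# C_{N-1}(p-2)$ (concatenation) with $C_{N-1}(k)=(c_{j+kp^{N-1}}: c_j\in C_{N-1})$, and $P_1(x;C_1)=c_0+c_1x+\dots+c_{p-2}x^{p-2}$, $P_N(x;C_N)=\sum_{k=0}^{p-2}x^{kp^{N-1}}P_{N-1}(x;C_{N-1}(k))$; unwinding this recursion gives exactly $P_N(x;C_N)=\sum_{j\in I_N}c_jx^j$ with $I_N$ as in the claim. In particular, when $p=2$, $I_N=\{0\}$ and $P_N$ is a constant. *)

theory Defs
  imports "HOL-Computational_Algebra.Polynomial" Complex_Main
begin

fun digit_sum :: "nat \<Rightarrow> nat \<Rightarrow> nat" where
  "digit_sum p n = (if p < 2 \<or> n = 0 then 0 else n mod p + digit_sum p (n div p))"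

definition vp :: "nat \<Rightarrow> nat \<Rightarrow> nat" where
  "vp p n = digit_sum p n mod p"

definition F_poly :: "nat \<Rightarrow> (nat \<Rightarrow> complex) \<Rightarrow> nat \<Rightarrow> complex poly" where
  "F_poly p a N = (\<Sum>n<p ^ N. monom (a (vp p n)) n)"

definition I_set :: "nat \<Rightarrow> nat \<Rightarrow> nat set" where
  "I_set p N = {j. j < p ^ N \<and> (\<forall>i<N. j div p ^ i mod p \<le> p - 2)}"

end

theory Submission
  imports Defs "HOL-Number_Theory.Cong"
begin

text \<open>
  Writing \<open>n < p^(N+1)\<close> as \<open>j + k p^N\<close> with \<open>j < p^N\<close> and \<open>k < p\<close>, the top digit \<open>k\<close> only
  shifts \<open>v_p\<close>, so \<open>F_(N+1)(x;A) = \<Sum>_k x^(k p^N) F_N(x;A_k)\<close> where \<open>A_k\<close> is \<open>A\<close> rotated by \<open>k\<close>.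
  By induction \<open>F_N(x;A_k) = Q_k \<Prod>_(m<N) (1 - x^(p^m))\<close> with \<open>Q_k\<close> supported on \<open>I_N\<close>. The
  rotations of \<open>A\<close> sum to zero, hence \<open>\<Sum>_k Q_k = 0\<close>, and then with \<open>y = x^(p^N)\<close>
  \<open>\<Sum>_k y^k Q_k = -(1 - y) \<Sum>_k (1 + y + \<dots> + y^(k-1)) Q_k\<close>. Only powers \<open>y^i\<close> with
  \<open>i \<le> p - 2\<close> occur on the right, so the new cofactor is supported on \<open>I_(N+1)\<close>.
\<close>

declare digit_sum.simps [simp del]

lemma digit_sum_0 [simp]: "digit_sum p 0 = 0"
  by (simp add: digit_sum.simps)

lemma digit_sum_eq: "p \<ge> 2 \<Longrightarrow> digit_sum p n = n mod p + digit_sum p (n div p)"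
  by (cases "n = 0") (simp_all add: digit_sum.simps)

lemma digit_sum_add_mult_power:
  assumes p: "p \<ge> 2"
  shows "j < p ^ N \<Longrightarrow> k < p \<Longrightarrow> digit_sum p (j + k * p ^ N) = digit_sum p j + k"
proof (induction N arbitrary: j)
  case 0
  then show ?case by (simp add: digit_sum_eq[OF p, of k])
next
  case (Suc N)
  have top_digit: "j + k * p ^ Suc N = j + (k * p ^ N) * p" by (simp add: ac_simps)
  have div: "(j + k * p ^ Suc N) div p = j div p + k * p ^ N"
    and mod: "(j + k * p ^ Suc N) mod p = j mod p"
    using p unfolding top_digit by simp_all
  have "j div p < p ^ N"
    using Suc.prems p by (simp add: less_mult_imp_div_less mult.commute)
  have "digit_sum p (j + k * p ^ Suc N) = j mod p + digit_sum p (j div p + k * p ^ N)"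
    by (simp only: digit_sum_eq[OF p, of "j + k * p ^ Suc N"] div mod)
  also have "\<dots> = j mod p + digit_sum p (j div p) + k"
    using Suc.IH[OF \<open>j div p < p ^ N\<close> Suc.prems(2)] by simp
  also have "\<dots> = digit_sum p j + k"
    by (simp add: digit_sum_eq[OF p, of j])
  finally show ?case .
qed

lemma vp_add_mult_power:
  "p \<ge> 2 \<Longrightarrow> j < p ^ N \<Longrightarrow> k < p \<Longrightarrow> vp p (j + k * p ^ N) = (vp p j + k) mod p"
  by (simp add: vp_def digit_sum_add_mult_power mod_add_left_eq)

lemma inj_on_add_mod: "inj_on (\<lambda>i. (i + k) mod n) {..<(n::nat)}"
  by (auto simp: inj_on_def) (metis cong_add_rcancel_nat cong_def mod_less)

lemma sum_lessThan_rotate: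
  "(\<Sum>i<n. f ((i + k) mod n)) = (\<Sum>i<(n::nat). f i :: 'a::comm_monoid_add)"
proof -
  have "(\<lambda>i. (i + k) mod n) ` {..<n} = {..<n}"
    by (rule endo_inj_surj) (auto simp: inj_on_add_mod)
  then show ?thesis
    using sum.reindex[OF inj_on_add_mod, of f k n] by simp
qed

lemma sum_powers_mult_eq:
  fixes y :: "'a::comm_ring_1"
  assumes "(\<Sum>k<n. Q k) = 0"
  shows "(\<Sum>k<n. y ^ k * Q k) = (1 - y) * - (\<Sum>k<n. Q k * (\<Sum>i<k. y ^ i))"
proof -
  have "(1 - y) * - (Q k * (\<Sum>i<k. y ^ i)) = - (Q k * ((1 - y) * (\<Sum>i<k. y ^ i)))" for k
    by (simp add: ac_simps)
  also have "\<dots> k = y ^ k * Q k - Q k" for k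
    by (simp only: one_diff_power_eq[symmetric]) (simp add: algebra_simps)
  finally have "(1 - y) * - (\<Sum>k<n. Q k * (\<Sum>i<k. y ^ i)) =
      (\<Sum>k<n. y ^ k * Q k) - (\<Sum>k<n. Q k)"
    by (simp add: sum_distrib_left sum_subtractf flip: sum_negf)
  then show ?thesis using assms by simp
qed

lemma sum_lessThan_mult_blocks:
  "(\<Sum>n<q * M. f n) = (\<Sum>k<q. \<Sum>j<M. f (j + k * (M::nat)) :: 'a::comm_monoid_add)"
proof -
  have "sum f {k * M..<k * M + M} = (\<Sum>j<M. f (j + k * M))" for k
    using sum.shift_bounds_nat_ivl[of f 0 "k * M" M] by (simp add: atLeast0LessThan add.commute)
  then show ?thesis
    using sum.nat_group[of f M q] by simp
qed

lemma prod_one_minus_monom_nonzero: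
  assumes "p > 0"
  shows "(\<Prod>m<N. 1 - monom (1 :: 'a :: idom) (p ^ m)) \<noteq> 0"
proof -
  have "coeff (1 - monom (1 :: 'a) (p ^ m)) 0 = 1" for m
    using assms by (simp add: coeff_monom)
  then have "1 - monom (1 :: 'a) (p ^ m) \<noteq> 0" for m
    by (metis coeff_0 zero_neq_one)
  then show ?thesis by (simp add: prod_zero_iff)
qed

lemma F_poly_Suc:
  assumes "p \<ge> 2"
  shows "F_poly p a (Suc N) =
    (\<Sum>k<p. monom 1 (k * p ^ N) * F_poly p (\<lambda>i. a ((i + k) mod p)) N)"
proof -
  have "F_poly p a (Suc N) = (\<Sum>k<p. \<Sum>j<p ^ N. monom (a (vp p (j + k * p ^ N))) (j + k * p ^ N))"
    unfolding F_poly_def by (simp add: sum_lessThan_mult_blocks)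
  also have "\<dots> = (\<Sum>k<p. \<Sum>j<p ^ N. monom 1 (k * p ^ N) * monom (a ((vp p j + k) mod p)) j)"
    using assms by (intro sum.cong refl) (simp add: vp_add_mult_power mult_monom add.commute)
  finally show ?thesis
    unfolding F_poly_def by (simp add: sum_distrib_left)
qed

lemma sum_F_poly_rotations:
  assumes "(\<Sum>i<p. a i) = 0"
  shows "(\<Sum>k<p. F_poly p (\<lambda>i. a ((i + k) mod p)) N) = 0"
proof -
  have "(\<Sum>k<p. a ((vp p n + k) mod p)) = 0" for n
    using sum_lessThan_rotate[of a "vp p n" p] assms by (simp add: add.commute)
  then show ?thesis
    unfolding F_poly_def by (subst sum.swap) (simp add: monom_sum[symmetric])
qed

lemma I_set_add_mult_power:
  assumes p: "p \<ge> 2" and j: "j \<in> I_set p N" and i: "i \<le> p - 2"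
  shows "j + i * p ^ N \<in> I_set p (Suc N)"
proof -
  have jl: "j < p ^ N" using j by (simp add: I_set_def)
  have "(i + 1) * p ^ N \<le> p * p ^ N"
    using p i by (intro mult_le_mono1) simp
  then have bound: "j + i * p ^ N < p ^ Suc N"
    using jl by simp
  have "(j + i * p ^ N) div p ^ l mod p \<le> p - 2" if "l < Suc N" for l
  proof (cases "l = N")
    case True
    then show ?thesis using jl i p by simp
  next
    case False
    then have "p ^ N = p ^ l * (p * p ^ (N - l - 1))"
      using that by (simp flip: power_add power_Suc)
    then have shift: "j + i * p ^ N = j + (i * p ^ (N - l - 1) * p) * p ^ l"
      by (simp add: ac_simps)
    have "(j + i * p ^ N) div p ^ l = (i * p ^ (N - l - 1)) * p + j div p ^ l"
      unfolding shift using p by simp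
    then show ?thesis
      using j that False by (simp add: I_set_def)
  qed
  with bound show ?thesis
    by (simp add: I_set_def)
qed

lemma coeff_sum_shifts_nonzero:
  assumes "coeff (\<Sum>k<n. \<Sum>i<k. monom 1 (i * M) * Q k) t \<noteq> 0"
  obtains k i where "i < k" "k < n" "i * M \<le> t" "coeff (Q k) (t - i * M) \<noteq> (0 :: 'a :: comm_semiring_1)"
proof -
  obtain k where "k < n" and "coeff (\<Sum>i<k. monom 1 (i * M) * Q k) t \<noteq> 0"
    using assms by (auto simp: coeff_sum elim: sum.not_neutral_contains_not_neutral)
  moreover from this obtain i where "i < k" and "coeff (monom 1 (i * M) * Q k) t \<noteq> 0"
    by (auto simp: coeff_sum elim: sum.not_neutral_contains_not_neutral)
  ultimately show ?thesis
    using that by (auto simp: coeff_monom_mult split: if_splits)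
qed

lemma poly_eq_sum_monom_support:
  assumes "finite S" and "\<And>t. coeff q t \<noteq> 0 \<Longrightarrow> t \<in> S"
  shows "q = (\<Sum>j\<in>S. monom (coeff q j) j)"
proof (rule poly_eqI)
  fix t
  have "coeff (\<Sum>j\<in>S. monom (coeff q j) j) t = (if t \<in> S then coeff q t else 0)"
    using assms(1) by (simp add: coeff_sum coeff_monom sum.delta')
  then show "coeff q t = coeff (\<Sum>j\<in>S. monom (coeff q j) j) t"
    using assms(2) by auto
qed

lemma F_poly_factorization:
  assumes p: "p \<ge> 2" and "(\<Sum>i<p. a i) = 0"
  shows "\<exists>Q. F_poly p a N = Q * (\<Prod>m<N. 1 - monom 1 (p ^ m)) \<and>
           (\<forall>t. coeff Q t \<noteq> 0 \<longrightarrow> t \<in> I_set p N)"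
  using assms(2)
proof (induction N arbitrary: a)
  case 0
  show ?case
    by (rule exI[of _ "monom (a 0) 0"]) (auto simp: F_poly_def vp_def I_set_def coeff_monom)
next
  case (Suc N)
  define \<Pi> :: "complex poly" where "\<Pi> = (\<Prod>m<N. 1 - monom 1 (p ^ m))"
  define y :: "complex poly" where "y = monom 1 (p ^ N)"
  have "\<forall>k. \<exists>Q. F_poly p (\<lambda>i. a ((i + k) mod p)) N = Q * \<Pi> \<and>
          (\<forall>t. coeff Q t \<noteq> 0 \<longrightarrow> t \<in> I_set p N)"
    using Suc.IH Suc.prems sum_lessThan_rotate[of a _ p] unfolding \<Pi>_def by simp
  then obtain Q where QF: "\<And>k. F_poly p (\<lambda>i. a ((i + k) mod p)) N = Q k * \<Pi>"
    and Q_supp: "\<And>k t. coeff (Q k) t \<noteq> 0 \<Longrightarrow> t \<in> I_set p N"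
    by metis
  have "(\<Sum>k<p. Q k) * \<Pi> = 0"
    using sum_F_poly_rotations[OF Suc.prems, of N] by (simp add: QF sum_distrib_right)
  moreover have "\<Pi> \<noteq> 0"
    unfolding \<Pi>_def using p by (intro prod_one_minus_monom_nonzero) simp
  ultimately have sum_Q: "(\<Sum>k<p. Q k) = 0"
    by simp
  define R where "R = - (\<Sum>k<p. \<Sum>i<k. monom 1 (i * p ^ N) * Q k)"
  have "F_poly p a (Suc N) = (\<Sum>k<p. y ^ k * Q k) * \<Pi>"
    unfolding F_poly_Suc[OF p] QF y_def
    by (simp add: monom_power sum_distrib_left sum_distrib_right ac_simps)
  also have "\<dots> = R * ((1 - y) * \<Pi>)"
    unfolding sum_powers_mult_eq[OF sum_Q] R_def y_def
    by (simp add: monom_power sum_distrib_left ac_simps)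
  finally have "F_poly p a (Suc N) = R * (\<Prod>m<Suc N. 1 - monom 1 (p ^ m))"
    by (simp add: \<Pi>_def y_def)
  moreover have "t \<in> I_set p (Suc N)" if "coeff R t \<noteq> 0" for t
  proof -
    from that obtain k i where "i < k" "k < p" "i * p ^ N \<le> t"
      and "coeff (Q k) (t - i * p ^ N) \<noteq> 0"
      unfolding R_def coeff_minus by (auto elim: coeff_sum_shifts_nonzero)
    then show ?thesis
      using I_set_add_mult_power[OF p Q_supp, of k "t - i * p ^ N" i] by simp
  qed
  ultimately show ?case by blast
qed

theorem theorem2p2:
  fixes p N :: nat and a :: "nat \<Rightarrow> complex"
  assumes "p \<ge> 2"
    and "(\<Sum>i<p. a i) = 0"
    and "N \<ge> 1"
  shows "\<exists>c :: nat \<Rightarrow> complex.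
           F_poly p a N =
             (\<Sum>j\<in>I_set p N. monom (c j) j) * (\<Prod>m<N. 1 - monom 1 (p ^ m))"
proof -
  \<comment> \<open>The factorization holds for \<open>N = 0\<close> as well.\<close>
  obtain Q where "F_poly p a N = Q * (\<Prod>m<N. 1 - monom 1 (p ^ m))"
    and "\<And>t. coeff Q t \<noteq> 0 \<Longrightarrow> t \<in> I_set p N"
    using F_poly_factorization[OF assms(1,2)] by blast
  moreover have "finite (I_set p N)"
    by (simp add: I_set_def)
  ultimately show ?thesis
    using poly_eq_sum_monom_support by metis
qed

end
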